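(* Let $p\in[1,\infty]$. (i) If $\mathcal A\subsetneq\mathcal B$ are $\sigma$-subfields, then $\|\mathbb P_{\mathcal B}-\mathbb P_{\mathcal A}\|_{L^p\to L^p}\ge1$. (ii) If $\mathcal A,\mathcal B$ are $\sigma$-subfields and there is $A\in\mathcal A$ with $\mathbb P(A)\in(0,1)$ that is independent of $\mathcal B$, then $\|\mathbb P_{\mathcal A}-\mathbb P_{\mathcal B}\|_{L^p\to L^p}\ge1$. Consequently, for $\sigma$-subfields $(\mathcal B_n)_{n\in\mathbb N_0}$, $\|\mathbb P_{\mathcal B_n}-\mathbb P_{\mathcal B_0}\|_{L^p\to L^p}\not\to0$ whenever either for infinitely many $n$ one has $\mathcal B_n\subsetneq\mathcal B_0$ or $\mathcal B_0\subsetneq\mathcal B_n$, or for infinitely many $n$ one of $\mathcal B_n,\mathcal B_0$ contains an event of probability in $(0,1)$ independent of the other. In particular, a monotone (increasing or decreasing) sequence of $\sigma$-subfields that is not ultimately constant never converges to its limit $\bigvee_n\mathcal B_n$ (resp. $\bigcap_n\mathcal B_n$) in the $L^p\to L^p$ operator norm.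
   Context: Let $(\Omega,\mathcal F,\mathbb P)$ be a (not necessarily complete) probability space and $\mathcal N:=\{F\in\mathcal F:\mathbb P(F)=0\}$. A $\sigma$-subfield is a sub-$\sigma$-field $\mathcal A\subset\mathcal F$ with $\mathcal A=\sigma(\mathcal A\cup\mathcal N)$. For a $\sigma$-subfield $\mathcal A$, $\mathbb P_{\mathcal A}f:=\mathbb E^{\mathbb P}[f\mid\mathcal A]$, viewed as a bounded linear operator on the real normed space $L^p(\mathbb P)$; $\|\cdot\|_{L^p\to L^p}$ is the operator norm. *)

theory Defs
  imports "HOL-Probability.Probability"
begin

definition sigma_subfield :: "'a measure \<Rightarrow> 'a measure \<Rightarrow> bool" where
  "sigma_subfield M F \<longleftrightarrow> subalgebra M F \<and>
     sets F = sigma_sets (space M) (sets F \<union> null_sets M)"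

definition Lp_norm :: "'a measure \<Rightarrow> ennreal \<Rightarrow> ('a \<Rightarrow> real) \<Rightarrow> ennreal" where
  "Lp_norm M p f =
     (if p = \<infinity> then esssup M (\<lambda>x. ennreal \<bar>f x\<bar>)
      else (let I = (\<integral>\<^sup>+ x. ennreal (\<bar>f x\<bar> powr enn2real p) \<partial>M)
            in if I = \<infinity> then \<infinity> else ennreal (enn2real I powr (1 / enn2real p))))"

definition memLp :: "'a measure \<Rightarrow> ennreal \<Rightarrow> ('a \<Rightarrow> real) \<Rightarrow> bool" where
  "memLp M p f \<longleftrightarrow> f \<in> borel_measurable M \<and> Lp_norm M p f < \<infinity>"

definition Lp_opnorm :: "'a measure \<Rightarrow> ennreal \<Rightarrow> (('a \<Rightarrow> real) \<Rightarrow> ('a \<Rightarrow> real)) \<Rightarrow> ennreal" where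
  "Lp_opnorm M p T = (SUP f \<in> {f. memLp M p f \<and> Lp_norm M p f \<le> 1}. Lp_norm M p (T f))"

definition cexp_diff_norm :: "'a measure \<Rightarrow> ennreal \<Rightarrow> 'a measure \<Rightarrow> 'a measure \<Rightarrow> ennreal" where
  "cexp_diff_norm M p B A =
     Lp_opnorm M p (\<lambda>f x. real_cond_exp M B f x - real_cond_exp M A f x)"

definition indep_of :: "'a measure \<Rightarrow> 'a set \<Rightarrow> 'a measure \<Rightarrow> bool" where
  "indep_of M E B \<longleftrightarrow> prob_space.indep_set M {E} (sets B)"

definition nontriv_indep_event :: "'a measure \<Rightarrow> 'a measure \<Rightarrow> 'a measure \<Rightarrow> bool" where
  "nontriv_indep_event M A B \<longleftrightarrow>
     (\<exists>E\<in>sets A. 0 < measure M E \<and> measure M E < 1 \<and> indep_of M E B)"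

end

theory Submission
  imports Defs
begin

text \<open>If a bounded function g, not a.e. zero, satisfies P_B g = g and P_A g = 0, then g
  normalised in L^p is a unit vector fixed by P_B - P_A, so this operator has norm at least 1.
  For A \<subset> B take g = 1_E - P_A 1_E with E \<in> B - A: it is not a.e. zero because A contains
  all null sets, so E is not a.e. equal to a set of A. For E \<in> A independent of B with
  0 < P(E) < 1 take g = 1_E - P(E), which P_B annihilates. The statements about sequences
  follow because the norm is then at least 1 infinitely often; a monotone sequence that is
  not eventually constant differs strictly from its limit \<sigma>-algebra at every index.\<close>

lemma Lp_norm_cong_AE:
  assumes "f \<in> borel_measurable M" "g \<in> borel_measurable M" "AE x in M. f x = g x"
  shows "Lp_norm M p f = Lp_norm M p g"
proof -
  have "esssup M (\<lambda>x. ennreal \<bar>f x\<bar>) = esssup M (\<lambda>x. ennreal \<bar>g x\<bar>)"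
    by (rule esssup_AE_cong) (use assms in auto)
  moreover have "(\<integral>\<^sup>+ x. ennreal (\<bar>f x\<bar> powr enn2real p) \<partial>M) =
      (\<integral>\<^sup>+ x. ennreal (\<bar>g x\<bar> powr enn2real p) \<partial>M)"
    by (rule nn_integral_cong_AE) (use assms(3) in auto)
  ultimately show ?thesis
    unfolding Lp_norm_def by simp
qed

lemma esssup_cmult_le:
  fixes h :: "'a \<Rightarrow> ennreal"
  assumes "h \<in> borel_measurable M"
  shows "esssup M (\<lambda>x. c * h x) \<le> c * esssup M h"
proof (rule esssup_I)
  show "(\<lambda>x. c * h x) \<in> borel_measurable M"
    using assms by measurable
  show "AE x in M. c * h x \<le> c * esssup M h"
    using esssup_AE[of h M] by (auto elim!: eventually_mono intro: mult_left_mono)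
qed

lemma esssup_cmult_ennreal:
  fixes h :: "'a \<Rightarrow> ennreal"
  assumes "h \<in> borel_measurable M" "c > 0"
  shows "esssup M (\<lambda>x. ennreal c * h x) = ennreal c * esssup M h"
proof (rule antisym)
  show "esssup M (\<lambda>x. ennreal c * h x) \<le> ennreal c * esssup M h"
    using assms(1) by (rule esssup_cmult_le)
  have "(\<lambda>x. ennreal c * h x) \<in> borel_measurable M"
    using assms by measurable
  moreover have "(\<lambda>x. ennreal (1/c) * (ennreal c * h x)) = h"
    using assms(2) by (simp add: mult.assoc[symmetric] ennreal_mult'[symmetric] del: ennreal_mult')
  ultimately have "esssup M h \<le> ennreal (1/c) * esssup M (\<lambda>x. ennreal c * h x)"
    by (metis esssup_cmult_le)
  then have "ennreal c * esssup M h \<le> ennreal c * (ennreal (1/c) * esssup M (\<lambda>x. ennreal c * h x))"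
    by (rule mult_left_mono) simp
  also have "\<dots> = esssup M (\<lambda>x. ennreal c * h x)"
    using assms(2) by (simp add: mult.assoc[symmetric] ennreal_mult'[symmetric] del: ennreal_mult')
  finally show "ennreal c * esssup M h \<le> esssup M (\<lambda>x. ennreal c * h x)" .
qed

lemma Lp_norm_cmult:
  assumes "f \<in> borel_measurable M" "c > 0" "p \<noteq> 0"
  shows "Lp_norm M p (\<lambda>x. c * f x) = ennreal c * Lp_norm M p f"
proof (cases "p = \<infinity>")
  case True
  have "esssup M (\<lambda>x. ennreal \<bar>c * f x\<bar>) = esssup M (\<lambda>x. ennreal c * ennreal \<bar>f x\<bar>)"
    using assms(2) by (simp add: abs_mult ennreal_mult)
  also have "\<dots> = ennreal c * esssup M (\<lambda>x. ennreal \<bar>f x\<bar>)"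
    by (rule esssup_cmult_ennreal) (use assms in auto)
  finally show ?thesis
    using True by (simp add: Lp_norm_def)
next
  case False
  define q where "q = enn2real p"
  have q: "q > 0"
    using assms(3) False unfolding q_def by (cases p rule: ennreal_cases) auto
  define I where "I = (\<integral>\<^sup>+ x. ennreal (\<bar>f x\<bar> powr q) \<partial>M)"
  have "(\<integral>\<^sup>+ x. ennreal (\<bar>c * f x\<bar> powr q) \<partial>M) =
      (\<integral>\<^sup>+ x. ennreal (c powr q) * ennreal (\<bar>f x\<bar> powr q) \<partial>M)"
    using assms(2) by (simp add: abs_mult powr_mult ennreal_mult)
  also have "\<dots> = ennreal (c powr q) * I"
    unfolding I_def by (rule nn_integral_cmult) (use assms in measurable)
  finally have scaled: "(\<integral>\<^sup>+ x. ennreal (\<bar>c * f x\<bar> powr q) \<partial>M) = ennreal (c powr q) * I" .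
  show ?thesis
  proof (cases "I = \<infinity>")
    case True
    then show ?thesis
      using False scaled assms(2) unfolding Lp_norm_def q_def[symmetric] I_def[symmetric]
      by (simp add: ennreal_mult_top)
  next
    case finite: False
    have "enn2real (ennreal (c powr q) * I) powr (1/q) = c * enn2real I powr (1/q)"
      using q assms(2) by (simp add: enn2real_mult powr_mult powr_powr)
    then show ?thesis
      using False finite scaled assms(2) unfolding Lp_norm_def q_def[symmetric] I_def[symmetric]
      by (simp add: ennreal_mult ennreal_mult_eq_top_iff)
  qed
qed

lemma Lp_norm_bounded_pos_finite:
  assumes "finite_measure M" "p \<noteq> 0" "g \<in> borel_measurable M" "AE x in M. \<bar>g x\<bar> \<le> C"
    "\<not> (AE x in M. g x = 0)"
  shows "0 < Lp_norm M p g" "Lp_norm M p g < \<infinity>"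
proof -
  interpret finite_measure M by fact
  have "0 < Lp_norm M p g \<and> Lp_norm M p g < \<infinity>"
  proof (cases "p = \<infinity>")
    case True
    have "esssup M (\<lambda>x. ennreal \<bar>g x\<bar>) \<le> ennreal C"
      by (rule esssup_I) (use assms(3,4) in \<open>auto elim!: eventually_mono\<close>)
    then have "esssup M (\<lambda>x. ennreal \<bar>g x\<bar>) < \<infinity>"
      using le_less_trans[OF _ ennreal_less_top] by simp
    moreover have "esssup M (\<lambda>x. ennreal \<bar>g x\<bar>) \<noteq> 0"
    proof
      assume "esssup M (\<lambda>x. ennreal \<bar>g x\<bar>) = 0"
      then have "AE x in M. g x = 0"
        using esssup_AE[of "\<lambda>x. ennreal \<bar>g x\<bar>" M] by (auto elim!: eventually_mono)
      with assms(5) show False by simp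
    qed
    ultimately show ?thesis
      using True by (auto simp: Lp_norm_def zero_less_iff_neq_zero)
  next
    case False
    define q where "q = enn2real p"
    have q: "q > 0"
      using assms(2) False unfolding q_def by (cases p rule: ennreal_cases) auto
    define I where "I = (\<integral>\<^sup>+ x. ennreal (\<bar>g x\<bar> powr q) \<partial>M)"
    have "I \<le> (\<integral>\<^sup>+ x. ennreal (\<bar>C\<bar> powr q) \<partial>M)"
      unfolding I_def
      by (rule nn_integral_mono_AE) (use assms(4) q in \<open>auto elim!: eventually_mono intro!: powr_mono2\<close>)
    also have "\<dots> < \<infinity>"
      by (simp add: ennreal_mult_less_top less_top[symmetric] ennreal_mult_eq_top_iff)
    finally have "I \<noteq> \<infinity>" by simp
    moreover have "I \<noteq> 0"
    proof
      assume "I = 0"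
      then have "AE x in M. ennreal (\<bar>g x\<bar> powr q) = 0"
        unfolding I_def by (subst (asm) nn_integral_0_iff_AE) (use assms(3) in auto)
      then have "AE x in M. g x = 0"
        by (auto elim!: eventually_mono)
      with assms(5) show False by simp
    qed
    ultimately have "enn2real I > 0"
      by (simp add: enn2real_positive_iff less_top zero_less_iff_neq_zero)
    with \<open>I \<noteq> \<infinity>\<close> show ?thesis
      using False unfolding Lp_norm_def q_def[symmetric] I_def[symmetric] by simp
  qed
  then show "0 < Lp_norm M p g" "Lp_norm M p g < \<infinity>" by auto
qed

lemma one_le_Lp_opnorm_if_fixes_line:
  assumes "finite_measure M" "p \<noteq> 0" "g \<in> borel_measurable M" "AE x in M. \<bar>g x\<bar> \<le> C"
    "\<not> (AE x in M. g x = 0)"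
    and fixes_line: "\<And>c. AE x in M. T (\<lambda>x. c * g x) x = c * g x"
    and measurable: "\<And>c. T (\<lambda>x. c * g x) \<in> borel_measurable M"
  shows "1 \<le> Lp_opnorm M p T"
proof -
  note norm_g = Lp_norm_bounded_pos_finite[OF assms(1-5)]
  have norm_g_pos: "enn2real (Lp_norm M p g) > 0"
    using norm_g by (simp add: enn2real_positive_iff)
  define c where "c = 1 / enn2real (Lp_norm M p g)"
  have c: "c > 0"
    using norm_g_pos by (simp add: c_def)
  define h where "h = (\<lambda>x. c * g x)"
  have h_meas: "h \<in> borel_measurable M"
    unfolding h_def using assms(3) by measurable
  have "Lp_norm M p h = ennreal c * Lp_norm M p g"
    unfolding h_def by (rule Lp_norm_cmult) (use assms c in auto)
  also have "\<dots> = ennreal (c * enn2real (Lp_norm M p g))"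
    using norm_g c by (simp add: ennreal_mult less_top)
  also have "\<dots> = 1"
    using norm_g_pos by (simp add: c_def)
  finally have norm_h: "Lp_norm M p h = 1" .
  have "h \<in> {f. memLp M p f \<and> Lp_norm M p f \<le> 1}"
    using norm_h h_meas by (simp add: memLp_def)
  then have "Lp_norm M p (T h) \<le> Lp_opnorm M p T"
    unfolding Lp_opnorm_def by (rule SUP_upper)
  moreover have "Lp_norm M p (T h) = Lp_norm M p h"
    by (rule Lp_norm_cong_AE) (use fixes_line measurable h_meas in \<open>auto simp: h_def\<close>)
  ultimately show ?thesis
    using norm_h by simp
qed

lemma cexp_diff_norm_commute: "cexp_diff_norm M p A B = cexp_diff_norm M p B A"
  unfolding cexp_diff_norm_def Lp_opnorm_def Lp_norm_def by (simp add: abs_minus_commute)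

lemma sigma_subfield_imp_sigma_finite_subalgebra:
  assumes "finite_measure M" "sigma_subfield M F"
  shows "sigma_finite_subalgebra M F"
proof -
  interpret finite_measure M by fact
  have "finite_measure_subalgebra M F"
    by unfold_locales (use assms(2) in \<open>simp add: sigma_subfield_def\<close>)
  then show ?thesis
    by (rule finite_measure_subalgebra_is_sigma_finite)
qed

lemma null_sets_subset_sigma_subfield:
  assumes "sigma_subfield M F"
  shows "null_sets M \<subseteq> sets F"
  using assms unfolding sigma_subfield_def by (blast intro: sigma_sets.Basic)

lemma sigma_subfield_AE_eq_set:
  assumes F: "sigma_subfield M F" and "E \<in> sets M" "E' \<in> sets F"
    and "AE x in M. x \<in> E \<longleftrightarrow> x \<in> E'"
  shows "E \<in> sets F"
proof -
  obtain N where N: "N \<in> null_sets M" "\<And>x. x \<in> space M - N \<Longrightarrow> x \<in> E \<longleftrightarrow> x \<in> E'"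
    using assms(4) by (elim AE_E3) blast
  have space: "space F = space M"
    using F by (simp add: sigma_subfield_def subalgebra_def)
  have "E = (E' - N) \<union> (E \<inter> N)"
    using N(2) sets.sets_into_space[OF assms(2)] sets.sets_into_space[OF assms(3)] space by blast
  moreover have "N \<in> sets F" "E \<inter> N \<in> sets F"
    using N(1) null_set_Int2[OF N(1) assms(2)] null_sets_subset_sigma_subfield[OF F]
    by (auto simp: Int_commute)
  ultimately show ?thesis
    using assms(3) by (metis sets.Diff sets.Un)
qed

lemma one_le_cexp_diff_norm_if_annihilated:
  assumes "finite_measure M" "p \<noteq> 0" "sigma_subfield M A" "sigma_subfield M B"
    and g_B: "g \<in> borel_measurable B" and bounded: "AE x in M. \<bar>g x\<bar> \<le> C"
    and nonnull: "\<not> (AE x in M. g x = 0)"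
    and annihilated: "AE x in M. real_cond_exp M A g x = 0"
  shows "1 \<le> cexp_diff_norm M p B A"
proof -
  interpret finite_measure M by fact
  interpret A: sigma_finite_subalgebra M A
    using assms(1,3) by (rule sigma_subfield_imp_sigma_finite_subalgebra)
  interpret B: sigma_finite_subalgebra M B
    using assms(1,4) by (rule sigma_subfield_imp_sigma_finite_subalgebra)
  have g_M: "g \<in> borel_measurable M"
    using B.subalg g_B by (rule measurable_from_subalg)
  have g_int: "integrable M g"
    using bounded g_M by (intro integrable_const_bound) auto
  show ?thesis
    unfolding cexp_diff_norm_def
  proof (rule one_le_Lp_opnorm_if_fixes_line[OF assms(1,2) g_M bounded nonnull])
    fix c :: real
    have "AE x in M. real_cond_exp M B (\<lambda>x. c * g x) x = c * g x"
      using g_int g_B by (intro B.real_cond_exp_F_meas) auto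
    moreover have "AE x in M. real_cond_exp M A (\<lambda>x. c * g x) x = c * real_cond_exp M A g x"
      using g_int by (rule A.real_cond_exp_cmult)
    ultimately show "AE x in M. real_cond_exp M B (\<lambda>x. c * g x) x - real_cond_exp M A (\<lambda>x. c * g x) x = c * g x"
      using annihilated by eventually_elim simp
  qed simp
qed

lemma real_cond_exp_indicator_not_AE_eq:
  assumes "finite_measure M" "sigma_subfield M A" "E \<in> sets M" "E \<notin> sets A"
  shows "\<not> (AE x in M. indicator E x = real_cond_exp M A (indicator E) x)"
proof
  interpret A: sigma_finite_subalgebra M A
    using assms(1,2) by (rule sigma_subfield_imp_sigma_finite_subalgebra)
  define h where "h = real_cond_exp M A (indicator E)"
  assume "AE x in M. indicator E x = real_cond_exp M A (indicator E) x"
  then have "AE x in M. x \<in> E \<longleftrightarrow> x \<in> {x \<in> space M. h x = 1}"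
    using AE_space by eventually_elim (auto simp: h_def indicator_def split: if_splits)
  moreover have "h \<in> borel_measurable A"
    unfolding h_def by simp
  then have "{x \<in> space M. h x = 1} \<in> sets A"
    using measurable_sets[of h A borel "{1}"] A.subalg
    by (simp add: subalgebra_def vimage_def Int_def conj_commute)
  ultimately have "E \<in> sets A"
    using assms(2,3) by (rule_tac sigma_subfield_AE_eq_set) auto
  with assms(4) show False ..
qed

lemma one_le_cexp_diff_norm_strict_subset:
  assumes "finite_measure M" "p \<noteq> 0" "sigma_subfield M A" "sigma_subfield M B"
    and "sets A \<subset> sets B"
  shows "1 \<le> cexp_diff_norm M p B A"
proof -
  interpret finite_measure M by fact
  interpret A: sigma_finite_subalgebra M A
    using assms(1,3) by (rule sigma_subfield_imp_sigma_finite_subalgebra)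
  obtain E where E: "E \<in> sets B" "E \<notin> sets A"
    using assms(5) by auto
  have E_M: "E \<in> sets M"
    using E(1) assms(4) by (auto simp: sigma_subfield_def subalgebra_def)
  define h where "h = real_cond_exp M A (indicator E)"
  have h_A: "h \<in> borel_measurable A"
    unfolding h_def by simp
  have ind_int: "integrable M (indicator E :: 'a \<Rightarrow> real)"
    using E_M by (simp add: less_top[symmetric])
  have h_int: "integrable M h"
    unfolding h_def using ind_int by (rule A.real_cond_exp_int(1))
  have "AE x in M. 0 \<le> h x" "AE x in M. h x \<le> 1"
    unfolding h_def using ind_int by (auto intro!: A.real_cond_exp_ge_c A.real_cond_exp_le_c)
  then have "AE x in M. \<bar>indicator E x - h x\<bar> \<le> (1::real)"
    by eventually_elim (auto simp: indicator_def)
  moreover have "\<not> (AE x in M. indicator E x - h x = (0::real))"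
    using real_cond_exp_indicator_not_AE_eq[OF assms(1,3) E_M E(2)]
    by (auto simp: h_def elim: eventually_mono)
  moreover have "AE x in M. real_cond_exp M A (\<lambda>x. indicator E x - h x) x = 0"
    using A.real_cond_exp_diff[OF ind_int h_int] A.real_cond_exp_F_meas[OF h_int h_A]
    by eventually_elim (simp add: h_def)
  moreover have "subalgebra B A"
    using assms(3-5) by (auto simp: sigma_subfield_def subalgebra_def)
  then have "(\<lambda>x. indicator E x - h x) \<in> borel_measurable B"
    using E(1) measurable_from_subalg[OF _ h_A] by simp
  ultimately show ?thesis
    using assms(1-4) by (rule_tac one_le_cexp_diff_norm_if_annihilated) auto
qed

lemma real_cond_exp_centered_indicator_indep:
  assumes "prob_space M" "subalgebra M B" "E \<in> sets M" "indep_of M E B"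
  shows "AE x in M. real_cond_exp M B (\<lambda>x. indicator E x - measure M E) x = 0"
proof -
  interpret prob_space M by fact
  interpret B: sigma_finite_subalgebra M B
    using assms(2) by (intro finite_measure_subalgebra_is_sigma_finite) unfold_locales
  have indep: "prob (E \<inter> S) = prob E * prob S" if "S \<in> sets B" for S
    using assms(4) that by (auto simp: indep_of_def indep_sets2_eq)
  show ?thesis
  proof (rule B.real_cond_exp_charact)
    fix S assume S: "S \<in> sets B"
    then have S_M: "S \<in> sets M"
      using assms(2) by (auto simp: subalgebra_def)
    have "(\<integral>x\<in>S. indicator E x - prob E \<partial>M) = (\<integral>x. indicator (E \<inter> S) x - prob E * indicator S x \<partial>M)"
      unfolding set_lebesgue_integral_def
      by (rule Bochner_Integration.integral_cong) (auto simp: indicator_def)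
    also have "\<dots> = prob (E \<inter> S) - prob E * prob S"
      using assms(3) S_M by (simp add: less_top[symmetric])
    finally show "(\<integral>x\<in>S. indicator E x - prob E \<partial>M) = (\<integral>x\<in>S. 0 \<partial>M)"
      using indep[OF S] by simp
  qed (use assms(3) in \<open>auto simp: less_top[symmetric]\<close>)
qed

lemma one_le_cexp_diff_norm_indep:
  assumes "prob_space M" "p \<noteq> 0" "sigma_subfield M A" "sigma_subfield M B"
    and "nontriv_indep_event M A B"
  shows "1 \<le> cexp_diff_norm M p A B"
proof -
  interpret prob_space M by fact
  obtain E where E: "E \<in> sets A" "0 < prob E" "prob E < 1" "indep_of M E B"
    using assms(5) by (auto simp: nontriv_indep_event_def)
  have E_M: "E \<in> sets M"
    using E(1) assms(3) by (auto simp: sigma_subfield_def subalgebra_def)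
  have "AE x in M. \<bar>indicator E x - prob E\<bar> \<le> 1"
    using E(2,3) by (auto simp: indicator_def)
  moreover have "\<not> (AE x in M. indicator E x - prob E = 0)"
    using E(2,3) AE_False by (auto elim!: eventually_mono simp: indicator_def split: if_splits)
  moreover have "AE x in M. real_cond_exp M B (\<lambda>x. indicator E x - prob E) x = 0"
    using assms(1,4) E_M E(4)
    by (intro real_cond_exp_centered_indicator_indep) (auto simp: sigma_subfield_def)
  ultimately show ?thesis
    using assms(2-4) E(1) finite_measure
    by (rule_tac one_le_cexp_diff_norm_if_annihilated) auto
qed

lemma one_le_cexp_diff_norm_if_comparable_or_indep:
  assumes "prob_space M" "p \<noteq> 0" "sigma_subfield M A" "sigma_subfield M B"
    and "sets A \<subset> sets B \<or> sets B \<subset> sets A \<or> nontriv_indep_event M A B \<or> nontriv_indep_event M B A"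
  shows "1 \<le> cexp_diff_norm M p A B"
  using assms one_le_cexp_diff_norm_strict_subset[of M p] one_le_cexp_diff_norm_indep[of M p]
    cexp_diff_norm_commute[of M p A B] prob_space.finite_measure[OF assms(1)]
  by metis

lemma sigma_subfield_sigma_UN:
  assumes "\<And>i. sigma_subfield M (F i)"
  shows "sigma_subfield M (sigma (space M) (\<Union>i. sets (F i)))"
proof -
  let ?S = "\<Union>i. sets (F i)"
  have "?S \<subseteq> sets M"
    using assms by (auto simp: sigma_subfield_def subalgebra_def)
  then have space: "?S \<subseteq> Pow (space M)"
    using sets.sets_into_space by blast
  have "null_sets M \<subseteq> ?S"
    using null_sets_subset_sigma_subfield[OF assms] by blast
  then have "sigma_sets (space M) ?S \<union> null_sets M = sigma_sets (space M) ?S"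
    by (blast intro: sigma_sets.Basic)
  then show ?thesis
    using \<open>?S \<subseteq> sets M\<close> space
    by (simp add: sigma_subfield_def subalgebra_def sets.sigma_sets_subset sigma_sets_sigma_sets_eq)
qed

lemma sets_sigma_INT:
  assumes "\<And>i. subalgebra M (F i)"
  shows "sets (sigma (space M) (\<Inter>i. sets (F i))) = (\<Inter>i. sets (F i))"
proof -
  let ?S = "\<Inter>i. sets (F i)"
  have "?S \<subseteq> Pow (space M)"
    using assms[of undefined] sets.sets_into_space by (fastforce simp: subalgebra_def)
  moreover have "sigma_sets (space M) ?S \<subseteq> sets (F i)" for i
    using assms[of i] sets.sigma_sets_subset[of ?S "F i"] by (auto simp: subalgebra_def)
  ultimately show ?thesis
    by (auto intro: sigma_sets.Basic)
qed

lemma sigma_subfield_sigma_INT: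
  assumes "\<And>i. sigma_subfield M (F i)"
  shows "sigma_subfield M (sigma (space M) (\<Inter>i. sets (F i)))"
proof -
  let ?S = "\<Inter>i. sets (F i)"
  have sets_eq: "sets (sigma (space M) ?S) = ?S"
    using assms by (intro sets_sigma_INT) (simp add: sigma_subfield_def)
  have sub: "?S \<subseteq> sets M"
    using assms[of undefined] by (auto simp: sigma_subfield_def subalgebra_def)
  then have Pow: "?S \<subseteq> Pow (space M)"
    using sets.sets_into_space by blast
  then have "sigma_sets (space M) ?S = ?S"
    using sets_eq by simp
  moreover have "null_sets M \<subseteq> ?S"
    using null_sets_subset_sigma_subfield[OF assms] by blast
  ultimately show ?thesis
    using sub Pow unfolding sigma_subfield_def subalgebra_def sets_eq by (auto simp: Un_absorb2)
qed

lemma incseq_psubset_UN: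
  assumes "incseq C" "\<not> (\<exists>N. \<forall>n\<ge>N. C n = C N)"
  shows "C n \<subset> (\<Union>n. C n)"
proof -
  have "C n \<noteq> (\<Union>n. C n)"
  proof
    assume "C n = (\<Union>n. C n)"
    then have "\<forall>m\<ge>n. C m = C n"
      using assms(1) by (auto simp: incseq_def)
    with assms(2) show False by blast
  qed
  then show ?thesis by blast
qed

lemma decseq_INT_psubset:
  assumes "decseq C" "\<not> (\<exists>N. \<forall>n\<ge>N. C n = C N)"
  shows "(\<Inter>n. C n) \<subset> C n"
proof -
  have "C n \<noteq> (\<Inter>n. C n)"
  proof
    assume "C n = (\<Inter>n. C n)"
    then have "\<forall>m\<ge>n. C m = C n"
      using assms(1) by (auto simp: decseq_def)
    with assms(2) show False by blast
  qed
  then show ?thesis by blast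
qed

lemma not_tendsto_if_frequently_ge:
  fixes u :: "'a \<Rightarrow> 'b::linorder_topology"
  assumes "frequently (\<lambda>n. c \<le> u n) F" "a < c"
  shows "\<not> (u \<longlongrightarrow> a) F"
proof
  assume "(u \<longlongrightarrow> a) F"
  then have "eventually (\<lambda>n. u n < c) F"
    using assms(2) by (rule order_tendstoD)
  with assms(1) show False
    by (simp add: frequently_def not_le)
qed

lemma sets_psubset_sigma_UN:
  assumes "\<And>n. subalgebra M (F n)" "\<And>n. sets (F n) \<subseteq> sets (F (Suc n))"
    and "\<not> (\<exists>N. \<forall>n\<ge>N. sets (F n) = sets (F N))"
  shows "sets (F n) \<subset> sets (sigma (space M) (\<Union>n. sets (F n)))"
proof -
  have "(\<Union>n. sets (F n)) \<subseteq> Pow (space M)"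
    using assms(1) sets.sets_into_space by (fastforce simp: subalgebra_def)
  then have "(\<Union>n. sets (F n)) \<subseteq> sets (sigma (space M) (\<Union>n. sets (F n)))"
    by (auto intro: sigma_sets.Basic)
  moreover have "sets (F n) \<subset> (\<Union>n. sets (F n))"
    using assms(2,3) by (intro incseq_psubset_UN incseq_SucI)
  ultimately show ?thesis by blast
qed

lemma sets_sigma_INT_psubset:
  assumes "\<And>n. subalgebra M (F n)" "\<And>n. sets (F (Suc n)) \<subseteq> sets (F n)"
    and "\<not> (\<exists>N. \<forall>n\<ge>N. sets (F n) = sets (F N))"
  shows "sets (sigma (space M) (\<Inter>n. sets (F n))) \<subset> sets (F n)"
proof -
  have "(\<Inter>n. sets (F n)) \<subset> sets (F n)"
    using assms(2,3) by (intro decseq_INT_psubset decseq_SucI)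
  then show ?thesis
    using assms(1) by (simp add: sets_sigma_INT)
qed

lemma cexp_diff_norm_not_tendsto_0:
  assumes "prob_space M" "p \<noteq> 0" "\<And>n. sigma_subfield M (Bs n)" "sigma_subfield M L"
    and "\<exists>\<^sub>F n in sequentially. sets (Bs n) \<subset> sets L \<or> sets L \<subset> sets (Bs n) \<or>
      nontriv_indep_event M (Bs n) L \<or> nontriv_indep_event M L (Bs n)"
  shows "\<not> ((\<lambda>n. cexp_diff_norm M p (Bs n) L) \<longlonglongrightarrow> 0)"
proof (rule not_tendsto_if_frequently_ge[of 1])
  show "\<exists>\<^sub>F n in sequentially. 1 \<le> cexp_diff_norm M p (Bs n) L"
    using assms(5) by (rule frequently_mono[rotated])
      (use assms(1-4) one_le_cexp_diff_norm_if_comparable_or_indep in blast)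
qed simp

theorem mainTheorem13:
  fixes M :: "'a measure" and p :: ennreal
  assumes "prob_space M" and "1 \<le> p"
  shows
   "(\<forall>A B. sigma_subfield M A \<and> sigma_subfield M B \<and> sets A \<subset> sets B
        \<longrightarrow> cexp_diff_norm M p B A \<ge> 1)
  \<and> (\<forall>A B. sigma_subfield M A \<and> sigma_subfield M B \<and> nontriv_indep_event M A B
        \<longrightarrow> cexp_diff_norm M p A B \<ge> 1)
  \<and> (\<forall>Bs :: nat \<Rightarrow> 'a measure. (\<forall>n. sigma_subfield M (Bs n)) \<and>
        (infinite {n. sets (Bs n) \<subset> sets (Bs 0) \<or> sets (Bs 0) \<subset> sets (Bs n)} \<or>
         infinite {n. nontriv_indep_event M (Bs n) (Bs 0) \<or> nontriv_indep_event M (Bs 0) (Bs n)})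
        \<longrightarrow> \<not> ((\<lambda>n. cexp_diff_norm M p (Bs n) (Bs 0)) \<longlonglongrightarrow> 0))
  \<and> (\<forall>Bs :: nat \<Rightarrow> 'a measure. (\<forall>n. sigma_subfield M (Bs n)) \<and>
        (\<forall>n. sets (Bs n) \<subseteq> sets (Bs (Suc n))) \<and>
        \<not> (\<exists>N. \<forall>n\<ge>N. sets (Bs n) = sets (Bs N))
        \<longrightarrow> \<not> ((\<lambda>n. cexp_diff_norm M p (Bs n) (sigma (space M) (\<Union>n. sets (Bs n)))) \<longlonglongrightarrow> 0))
  \<and> (\<forall>Bs :: nat \<Rightarrow> 'a measure. (\<forall>n. sigma_subfield M (Bs n)) \<and>
        (\<forall>n. sets (Bs (Suc n)) \<subseteq> sets (Bs n)) \<and>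
        \<not> (\<exists>N. \<forall>n\<ge>N. sets (Bs n) = sets (Bs N))
        \<longrightarrow> \<not> ((\<lambda>n. cexp_diff_norm M p (Bs n) (sigma (space M) (\<Inter>n. sets (Bs n)))) \<longlonglongrightarrow> 0))"
proof -
  have "p \<noteq> 0"
    using assms(2) by auto
  note ge_1 = one_le_cexp_diff_norm_if_comparable_or_indep[OF assms(1) this]
    and not_tendsto = cexp_diff_norm_not_tendsto_0[OF assms(1) this]
  have subalgebra: "subalgebra M F" if "sigma_subfield M F" for F
    using that by (simp add: sigma_subfield_def)
  show ?thesis
  proof (intro conjI allI impI; elim conjE)
    fix A B :: "'a measure" and Bs :: "nat \<Rightarrow> 'a measure"
    show "1 \<le> cexp_diff_norm M p B A" if "sigma_subfield M A" "sigma_subfield M B" "sets A \<subset> sets B"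
      using that ge_1[of B A] by blast
    show "1 \<le> cexp_diff_norm M p A B"
      if "sigma_subfield M A" "sigma_subfield M B" "nontriv_indep_event M A B"
      using that ge_1[of A B] by blast
    show "\<not> ((\<lambda>n. cexp_diff_norm M p (Bs n) (Bs 0)) \<longlonglongrightarrow> 0)"
      if "\<forall>n. sigma_subfield M (Bs n)"
        "infinite {n. sets (Bs n) \<subset> sets (Bs 0) \<or> sets (Bs 0) \<subset> sets (Bs n)} \<or>
         infinite {n. nontriv_indep_event M (Bs n) (Bs 0) \<or> nontriv_indep_event M (Bs 0) (Bs n)}"
      using that by (intro not_tendsto)
        (auto simp: frequently_cofinite Collect_disj_eq simp flip: cofinite_eq_sequentially)
    show "\<not> ((\<lambda>n. cexp_diff_norm M p (Bs n) (sigma (space M) (\<Union>n. sets (Bs n)))) \<longlonglongrightarrow> 0)"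
      if "\<forall>n. sigma_subfield M (Bs n)" "\<forall>n. sets (Bs n) \<subseteq> sets (Bs (Suc n))"
        "\<not> (\<exists>N. \<forall>n\<ge>N. sets (Bs n) = sets (Bs N))"
      using that by (intro not_tendsto sigma_subfield_sigma_UN eventually_frequently always_eventually
          allI disjI1 sets_psubset_sigma_UN subalgebra) simp_all
    show "\<not> ((\<lambda>n. cexp_diff_norm M p (Bs n) (sigma (space M) (\<Inter>n. sets (Bs n)))) \<longlonglongrightarrow> 0)"
      if "\<forall>n. sigma_subfield M (Bs n)" "\<forall>n. sets (Bs (Suc n)) \<subseteq> sets (Bs n)"
        "\<not> (\<exists>N. \<forall>n\<ge>N. sets (Bs n) = sets (Bs N))"
      using that by (intro not_tendsto sigma_subfield_sigma_INT eventually_frequently always_eventually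
          allI disjI2[OF disjI1] sets_sigma_INT_psubset subalgebra) simp_all
  qed
qed

end
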